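(* Let $k\subset K$ be differential fields of characteristic zero with the same field of constants $C$, assumed algebraically closed, and assume there is $x\in k$ with $x'=1$. Let $f_1,\dots,f_n\in K$ be iterated integrals over $k$. If $f_1,\dots,f_n$ are algebraically dependent over $k$, then there exist $u_1,\dots,u_n\in k$, not all zero, such that $u_1f_1+\cdots+u_nf_n\in k$.
   Context: An element $f\in K$ is an iterated integral over $k$ if $f^{(m)}\in k$ for some $m\in\mathbb{N}$. Here $k$ need not be algebraically closed. *)

theory Defs
  imports "HOL-Computational_Algebra.Polynomial"
begin

text \<open>A derivation on the whole field type: the ambient differential field K is the type 'a.\<close>
definition derivation :: "('a::field \<Rightarrow> 'a) \<Rightarrow> bool" where
  "derivation D \<longleftrightarrow> (\<forall>a b. D (a + b) = D a + D b) \<and> (\<forall>a b. D (a * b) = D a * b + a * D b)"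

definition is_subfield :: "'a::field set \<Rightarrow> bool" where
  "is_subfield k \<longleftrightarrow> 0 \<in> k \<and> 1 \<in> k \<and> (\<forall>a\<in>k. \<forall>b\<in>k. a + b \<in> k \<and> a * b \<in> k)
     \<and> (\<forall>a\<in>k. - a \<in> k) \<and> (\<forall>a\<in>k. inverse a \<in> k)"

definition differential_subfield :: "('a::field \<Rightarrow> 'a) \<Rightarrow> 'a set \<Rightarrow> bool" where
  "differential_subfield D k \<longleftrightarrow> is_subfield k \<and> (\<forall>a\<in>k. D a \<in> k)"

definition constants :: "('a::field \<Rightarrow> 'a) \<Rightarrow> 'a set" where
  "constants D = {c. D c = 0}"

definition alg_closed_set :: "'a::field set \<Rightarrow> bool" where
  "alg_closed_set C \<longleftrightarrow> (\<forall>p :: 'a poly. (\<forall>i. coeff p i \<in> C) \<longrightarrow> degree p > 0 \<longrightarrow> (\<exists>z\<in>C. poly p z = 0))"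

definition iterated_integral :: "('a::field \<Rightarrow> 'a) \<Rightarrow> 'a set \<Rightarrow> 'a \<Rightarrow> bool" where
  "iterated_integral D k f \<longleftrightarrow> (\<exists>m::nat. (D ^^ m) f \<in> k)"

text \<open>A polynomial is a finite set S of exponent
  vectors (supported in {..<n}) with coefficients c.\<close>
definition alg_dependent :: "'a::field set \<Rightarrow> nat \<Rightarrow> (nat \<Rightarrow> 'a) \<Rightarrow> bool" where
  "alg_dependent k n f \<longleftrightarrow> (\<exists>(S :: (nat \<Rightarrow> nat) set) (c :: (nat \<Rightarrow> nat) \<Rightarrow> 'a).
      finite S \<and> (\<forall>e\<in>S. \<forall>i\<ge>n. e i = 0) \<and> (\<forall>e\<in>S. c e \<in> k) \<and> (\<exists>e\<in>S. c e \<noteq> 0)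
      \<and> (\<Sum>e\<in>S. c e * (\<Prod>i<n. f i ^ e i)) = 0)"

end

(* Fix x in k with x' = 1. Integration by parts against powers of x
   writes every iterated integral over k as a k-linear combination of primitives, i.e. elements
   whose derivative lies in k, and these primitives can be chosen linearly independent over the
   constants modulo k. By the Kolchin-Ostrowski theorem they are then algebraically independent
   over k: adjoining them one at a time, every intermediate ring k[h_0, ..., h_(m-1)] is
   differentially simple, which rules out an algebraic relation for the next primitive h_m.
   If no nontrivial k-linear combination of f_1, ..., f_n lies in k, a Steinitz exchange replaces
   n of the primitives by f_1, ..., f_n, so these are algebraically independent as well. *)

theory Submission
  imports Defs
begin

section \<open>Subrings, adjunction and transcendence\<close>

definition is_subring :: "'a::comm_ring_1 set \<Rightarrow> bool" where
  "is_subring B \<longleftrightarrow> 0 \<in> B \<and> 1 \<in> B \<and> (\<forall>a\<in>B. \<forall>b\<in>B. a + b \<in> B \<and> a * b \<in> B) \<and> (\<forall>a\<in>B. - a \<in> B)"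

lemma subfield_imp_subring: "is_subfield k \<Longrightarrow> is_subring k"
  unfolding is_subfield_def is_subring_def by blast

context
  fixes B :: "'a::comm_ring_1 set"
  assumes B: "is_subring B"
begin

lemma subring_0: "0 \<in> B" and subring_1: "1 \<in> B"
  and subring_add: "a \<in> B \<Longrightarrow> b \<in> B \<Longrightarrow> a + b \<in> B"
  and subring_mult: "a \<in> B \<Longrightarrow> b \<in> B \<Longrightarrow> a * b \<in> B"
  and subring_uminus: "a \<in> B \<Longrightarrow> - a \<in> B"
  using B unfolding is_subring_def by auto

lemma subring_diff: "a \<in> B \<Longrightarrow> b \<in> B \<Longrightarrow> a - b \<in> B"
  using subring_add subring_uminus by (metis diff_conv_add_uminus)

lemma subring_sum: "(\<And>x. x \<in> A \<Longrightarrow> f x \<in> B) \<Longrightarrow> sum f A \<in> B"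
  by (induction A rule: infinite_finite_induct) (auto intro: subring_0 subring_add)

lemma subring_prod: "(\<And>x. x \<in> A \<Longrightarrow> f x \<in> B) \<Longrightarrow> prod f A \<in> B"
  by (induction A rule: infinite_finite_induct) (auto intro: subring_1 subring_mult)

lemma subring_power: "a \<in> B \<Longrightarrow> a ^ n \<in> B"
  by (induction n) (auto intro: subring_1 subring_mult)

lemma subring_of_nat: "of_nat n \<in> B"
  by (induction n) (auto intro: subring_0 subring_1 subring_add)

lemma subring_poly: "(\<And>i. coeff Q i \<in> B) \<Longrightarrow> a \<in> B \<Longrightarrow> poly Q a \<in> B"
  unfolding poly_altdef by (intro subring_sum subring_mult subring_power)

end

definition adjoin :: "'a::comm_ring_1 set \<Rightarrow> 'a \<Rightarrow> 'a set" where
  "adjoin B a = {poly Q a | Q. \<forall>i. coeff Q i \<in> B}"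

lemma mem_adjoinI: "(\<And>i. coeff Q i \<in> B) \<Longrightarrow> poly Q a \<in> adjoin B a"
  unfolding adjoin_def by blast

lemma mem_adjoinE:
  assumes "y \<in> adjoin B a"
  obtains Q where "y = poly Q a" "\<And>i. coeff Q i \<in> B"
  using assms unfolding adjoin_def by blast

lemma subset_adjoin: "is_subring B \<Longrightarrow> B \<subseteq> adjoin B a"
proof
  fix b assume "is_subring B" "b \<in> B"
  then have "poly [:b:] a \<in> adjoin B a"
    by (intro mem_adjoinI) (simp add: coeff_pCons subring_0 split: nat.split)
  then show "b \<in> adjoin B a" by simp
qed

lemma mem_adjoin_self: "is_subring B \<Longrightarrow> a \<in> adjoin B a"
  using mem_adjoinI[of "[:0, 1:]" B a]
  by (simp add: coeff_pCons subring_0 subring_1 split: nat.split)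

lemma subring_adjoin:
  assumes B: "is_subring B"
  shows "is_subring (adjoin B a)"
proof -
  have "x + y \<in> adjoin B a \<and> x * y \<in> adjoin B a"
    if x: "x \<in> adjoin B a" and y: "y \<in> adjoin B a" for x y
  proof -
    obtain P where P: "x = poly P a" "\<And>i. coeff P i \<in> B"
      using x by (blast elim: mem_adjoinE)
    obtain Q where "y = poly Q a" "\<And>i. coeff Q i \<in> B"
      using y by (blast elim: mem_adjoinE)
    with P show ?thesis
      using mem_adjoinI[of "P + Q" B a] mem_adjoinI[of "P * Q" B a]
        coeff_mult_semiring_closed[OF subring_0[OF B] subring_add[OF B] subring_mult[OF B]]
      by (auto intro: subring_add[OF B])
  qed
  moreover have "- x \<in> adjoin B a" if x: "x \<in> adjoin B a" for x
  proof -
    obtain P where "x = poly P a" "\<And>i. coeff P i \<in> B"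
      using x by (blast elim: mem_adjoinE)
    then show ?thesis using mem_adjoinI[of "- P" B a] subring_uminus[OF B] by simp
  qed
  ultimately show ?thesis
    using subset_adjoin[OF B] subring_0[OF B] subring_1[OF B] unfolding is_subring_def by blast
qed

lemma adjoin_least:
  assumes S: "is_subring S" and "B \<subseteq> S" "a \<in> S"
  shows "adjoin B a \<subseteq> S"
proof
  fix y assume "y \<in> adjoin B a"
  then obtain Q where "y = poly Q a" "\<And>i. coeff Q i \<in> B" by (blast elim: mem_adjoinE)
  with assms show "y \<in> S" by (auto intro: subring_poly[OF S])
qed

lemma adjoin_commute:
  assumes B: "is_subring B"
  shows "adjoin (adjoin B a) b = adjoin (adjoin B b) a"
proof -
  have "adjoin (adjoin B a) b \<subseteq> adjoin (adjoin B b) a" for a b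
  proof -
    have S: "is_subring (adjoin (adjoin B b) a)" using B by (intro subring_adjoin)
    have "B \<subseteq> adjoin (adjoin B b) a"
      using subset_adjoin[OF B] subset_adjoin[OF subring_adjoin[OF B]] by blast
    moreover have "b \<in> adjoin (adjoin B b) a"
      using mem_adjoin_self[OF B] subset_adjoin[OF subring_adjoin[OF B]] by blast
    ultimately show ?thesis
      using S mem_adjoin_self[OF subring_adjoin[OF B]] by (intro adjoin_least) auto
  qed
  then show ?thesis by blast
qed

definition transcendental_over :: "'a::comm_ring_1 set \<Rightarrow> 'a \<Rightarrow> bool" where
  "transcendental_over B a \<longleftrightarrow> (\<forall>Q. (\<forall>i. coeff Q i \<in> B) \<longrightarrow> poly Q a = 0 \<longrightarrow> Q = 0)"

lemma transcendental_overD: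
  "transcendental_over B a \<Longrightarrow> (\<And>i. coeff Q i \<in> B) \<Longrightarrow> poly Q a = 0 \<Longrightarrow> Q = 0"
  unfolding transcendental_over_def by blast

lemma transcendental_over_subset:
  "B \<subseteq> B' \<Longrightarrow> transcendental_over B' a \<Longrightarrow> transcendental_over B a"
  unfolding transcendental_over_def by blast

lemma transcendental_over_affine:
  fixes a b c :: "'a::idom"
  assumes B: "is_subring B" and a: "transcendental_over B a" and "b \<in> B" "c \<in> B" "b \<noteq> 0"
  shows "transcendental_over B (b * a + c)"
  unfolding transcendental_over_def
proof (intro allI impI)
  fix Q assume Q: "\<forall>i. coeff Q i \<in> B" "poly Q (b * a + c) = 0"
  have "coeff [:c, b:] i \<in> B" for i
    using assms subring_0[OF B] by (auto simp: coeff_pCons split: nat.splits)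
  then have "\<forall>i. coeff (pcompose Q [:c, b:]) i \<in> B"
    using coeff_pcompose_semiring_closed[OF subring_0[OF B] subring_add[OF B] subring_mult[OF B]] Q(1)
    by blast
  moreover have "poly (pcompose Q [:c, b:]) a = 0"
    using Q(2) by (simp add: poly_pcompose algebra_simps)
  ultimately have "pcompose Q [:c, b:] = 0"
    using a by (blast intro: transcendental_overD)
  then show "Q = 0" using pcompose_eq_0 \<open>b \<noteq> 0\<close> by fastforce
qed

lemma transcendental_over_swap:
  assumes B: "is_subring B" and a: "transcendental_over B a"
    and b: "transcendental_over (adjoin B a) b"
  shows "transcendental_over (adjoin B b) a"
  unfolding transcendental_over_def
proof (intro allI impI)
  fix P assume P: "\<forall>i. coeff P i \<in> adjoin B b" "poly P a = 0"
  then have "\<forall>i. \<exists>Q. coeff P i = poly Q b \<and> (\<forall>j. coeff Q j \<in> B)"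
    unfolding adjoin_def by blast
  then obtain Q where Q: "\<And>i. coeff P i = poly (Q i) b" "\<And>i j. coeff (Q i) j \<in> B"
    by metis
  define d where "d = degree P"
  define Qj where "Qj j = (\<Sum>i\<le>d. monom (coeff (Q i) j) i)" for j
  define R where "R = (\<Sum>i\<le>d. smult (a ^ i) (Q i))"
  have coeff_R: "coeff R j = poly (Qj j) a" for j
    unfolding R_def Qj_def by (simp add: coeff_sum poly_sum poly_monom mult.commute)
  have coeff_Qj: "coeff (Qj j) i \<in> B" for i j
    unfolding Qj_def coeff_sum using Q(2) by (auto intro: subring_sum[OF B] simp: subring_0[OF B])
  have "poly R b = (\<Sum>i\<le>d. coeff P i * a ^ i)"
    unfolding R_def by (simp add: poly_sum Q(1) mult.commute)
  also have "\<dots> = poly P a" unfolding d_def by (simp add: poly_altdef)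
  finally have "poly R b = poly P a" .
  then have "R = 0"
    using P(2) coeff_R coeff_Qj by (auto intro!: transcendental_overD[OF b] mem_adjoinI)
  then have "Qj j = 0" for j
    using coeff_R coeff_Qj by (auto intro!: transcendental_overD[OF a])
  then have "coeff (Q i) j = 0" if "i \<le> d" for i j
    using coeff_sum_monom[OF that, of "\<lambda>i. coeff (Q i) j"] unfolding Qj_def by simp
  then have "Q i = 0" if "i \<le> d" for i
    using that by (simp add: poly_eq_iff)
  then have "coeff P i = 0" if "i \<le> d" for i
    using that Q(1)[of i] by simp
  then have "coeff P i = 0" for i
    using coeff_eq_0[of P i] unfolding d_def by fastforce
  then show "P = 0" by (simp add: poly_eq_iff)
qed

section \<open>Algebraic independence\<close>

fun adjoin_upto :: "'a::comm_ring_1 set \<Rightarrow> (nat \<Rightarrow> 'a) \<Rightarrow> nat \<Rightarrow> 'a set" where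
  "adjoin_upto B g 0 = B"
| "adjoin_upto B g (Suc m) = adjoin (adjoin_upto B g m) (g m)"

lemma subring_adjoin_upto: "is_subring B \<Longrightarrow> is_subring (adjoin_upto B g m)"
  by (induction m) (simp_all add: subring_adjoin)

lemma adjoin_upto_mono:
  assumes "is_subring B" "m \<le> m'"
  shows "adjoin_upto B g m \<subseteq> adjoin_upto B g m'"
  using assms(2)
proof (induction m' rule: dec_induct)
  case (step n)
  then show ?case using subset_adjoin[OF subring_adjoin_upto[OF assms(1)], of g n "g n"] by auto
qed simp

lemma subset_adjoin_upto: "is_subring B \<Longrightarrow> B \<subseteq> adjoin_upto B g m"
  using adjoin_upto_mono[of B 0 m g] by simp

lemma mem_adjoin_upto: "is_subring B \<Longrightarrow> p < q \<Longrightarrow> g p \<in> adjoin_upto B g q"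
  using adjoin_upto_mono[of B "Suc p" q g] mem_adjoin_self[OF subring_adjoin_upto[of B g p]]
  by auto

lemma adjoin_upto_cong: "(\<And>i. i < m \<Longrightarrow> g i = g' i) \<Longrightarrow> adjoin_upto B g m = adjoin_upto B g' m"
  by (induction m) auto

definition alg_indep :: "'a::comm_ring_1 set \<Rightarrow> nat \<Rightarrow> (nat \<Rightarrow> 'a) \<Rightarrow> bool" where
  "alg_indep B N g \<longleftrightarrow> (\<forall>j<N. transcendental_over (adjoin_upto B g j) (g j))"

lemma alg_indep_cong: "alg_indep B N g \<Longrightarrow> (\<And>i. i < N \<Longrightarrow> g i = g' i) \<Longrightarrow> alg_indep B N g'"
  unfolding alg_indep_def by (metis adjoin_upto_cong order.strict_trans)

lemma alg_indep_le: "alg_indep B N g \<Longrightarrow> n \<le> N \<Longrightarrow> alg_indep B n g"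
  unfolding alg_indep_def by auto

lemma alg_indep_Suc:
  "alg_indep B (Suc N) g \<longleftrightarrow> alg_indep B N g \<and> transcendental_over (adjoin_upto B g N) (g N)"
  unfolding alg_indep_def by (auto simp: less_Suc_eq)

lemma adjoin_upto_swap:
  assumes B: "is_subring B" and "Suc (Suc j) \<le> p"
  shows "adjoin_upto B (g(j := g (Suc j), Suc j := g j)) p = adjoin_upto B g p"
  using assms(2)
proof (induction p rule: dec_induct)
  case base
  let ?g = "g(j := g (Suc j), Suc j := g j)"
  have below: "adjoin_upto B ?g j = adjoin_upto B g j" by (rule adjoin_upto_cong) auto
  have "adjoin_upto B ?g (Suc (Suc j)) = adjoin (adjoin (adjoin_upto B g j) (g (Suc j))) (g j)"
    by (simp only: adjoin_upto.simps below) simp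
  also have "\<dots> = adjoin_upto B g (Suc (Suc j))"
    using adjoin_commute[OF subring_adjoin_upto[OF B]] by simp
  finally show ?case .
qed simp

lemma alg_indep_swap:
  assumes B: "is_subring B" and g: "alg_indep B N g" and "Suc j < N"
  shows "alg_indep B N (g(j := g (Suc j), Suc j := g j))" (is "alg_indep B N ?g")
  unfolding alg_indep_def
proof (intro allI impI)
  fix p assume "p < N"
  have below: "adjoin_upto B ?g j = adjoin_upto B g j" by (rule adjoin_upto_cong) auto
  have tj: "transcendental_over (adjoin_upto B g j) (g j)"
    and tj1: "transcendental_over (adjoin (adjoin_upto B g j) (g j)) (g (Suc j))"
    using g \<open>Suc j < N\<close> unfolding alg_indep_def by auto
  consider "p < j" | "p = j" | "p = Suc j" | "Suc (Suc j) \<le> p" by linarith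
  then show "transcendental_over (adjoin_upto B ?g p) (?g p)"
  proof cases
    case 1
    then have "adjoin_upto B ?g p = adjoin_upto B g p" by (intro adjoin_upto_cong) auto
    with 1 g \<open>p < N\<close> show ?thesis unfolding alg_indep_def by simp
  next
    case 2
    with below tj1 show ?thesis
      by (auto intro: transcendental_over_subset[OF subset_adjoin[OF subring_adjoin_upto[OF B]]])
  next
    case 3
    with below tj1 show ?thesis using transcendental_over_swap[OF subring_adjoin_upto[OF B] tj] by simp
  next
    case 4
    with g \<open>p < N\<close> show ?thesis using adjoin_upto_swap[OF B 4] unfolding alg_indep_def by simp
  qed
qed

definition rotate_index :: "nat \<Rightarrow> nat \<Rightarrow> nat \<Rightarrow> nat" where
  "rotate_index m N i = (if i < m then i else if i < N - 1 then Suc i else m)"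

lemma alg_indep_rotate:
  assumes B: "is_subring B" and "alg_indep B N g" "m < N"
  shows "alg_indep B N (g \<circ> rotate_index m N)"
proof -
  have "\<forall>g. alg_indep B N g \<longrightarrow> alg_indep B N (g \<circ> rotate_index m N)" if "m \<le> N - 1"
    using that
  proof (induction m rule: inc_induct)
    case base
    have "rotate_index (N - 1) N i = i" if "i < N" for i
      using that by (auto simp: rotate_index_def)
    then show ?case by (auto elim!: alg_indep_cong)
  next
    case (step n)
    show ?case
    proof (intro allI impI)
      fix g assume "alg_indep B N g"
      then have "alg_indep B N (g(n := g (Suc n), Suc n := g n))"
        using alg_indep_swap[OF B] step.hyps by simp
      then have "alg_indep B N (g(n := g (Suc n), Suc n := g n) \<circ> rotate_index (Suc n) N)"
        using step.IH by blast
      moreover have "(g(n := g (Suc n), Suc n := g n) \<circ> rotate_index (Suc n) N) i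
          = (g \<circ> rotate_index n N) i" if "i < N" for i
        using that step.hyps by (auto simp: rotate_index_def)
      ultimately show "alg_indep B N (g \<circ> rotate_index n N)" by (rule alg_indep_cong)
    qed
  qed
  with assms show ?thesis by auto
qed

lemma alg_indep_drop_first:
  assumes "is_subring B" "alg_indep B (Suc N) g"
  shows "alg_indep B N (\<lambda>i. g (Suc i))"
proof -
  have "alg_indep B (Suc N) (g \<circ> rotate_index 0 (Suc N))"
    using alg_indep_rotate[OF assms] by simp
  then have "alg_indep B N (g \<circ> rotate_index 0 (Suc N))" by (rule alg_indep_le) simp
  then show ?thesis by (rule alg_indep_cong) (simp add: rotate_index_def)
qed

lemma alg_indep_drop: "is_subring B \<Longrightarrow> alg_indep B (d + N) g \<Longrightarrow> alg_indep B N (\<lambda>i. g (d + i))"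
proof (induction d arbitrary: g)
  case (Suc d)
  then show ?case using alg_indep_drop_first[of B "d + N" g] by simp
qed simp

text \<open>Distinct monomials in \<open>f 0, \<dots>, f (n - 1)\<close> are only required to have distinct exponents
  below \<open>n\<close>; this form of the statement is stable under slicing by the exponent of \<open>f (n - 1)\<close>.\<close>
lemma alg_indep_monomials:
  assumes B: "is_subring B"
  shows "alg_indep B n f \<Longrightarrow> finite S \<Longrightarrow> (\<And>e e'. e \<in> S \<Longrightarrow> e' \<in> S \<Longrightarrow> (\<forall>i<n. e i = e' i) \<Longrightarrow> e = e')
    \<Longrightarrow> (\<And>e. e \<in> S \<Longrightarrow> c e \<in> B) \<Longrightarrow> (\<Sum>e\<in>S. c e * (\<Prod>i<n. f i ^ e i)) = 0
    \<Longrightarrow> e \<in> S \<Longrightarrow> c e = 0"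
proof (induction n arbitrary: S e)
  case 0
  then have "S = {e}" by blast
  with 0 show ?case by simp
next
  case (Suc n)
  define mon where "mon e = (\<Prod>i<n. f i ^ e i)" for e :: "nat \<Rightarrow> nat"
  define Q where "Q = (\<Sum>e\<in>S. monom (c e * mon e) (e n))"
  have coeff_Q: "coeff Q d = (\<Sum>e\<in>{e\<in>S. e n = d}. c e * mon e)" for d
    unfolding Q_def coeff_sum using Suc.prems(2) by (simp add: sum.inter_filter)
  have "poly Q (f n) = (\<Sum>e\<in>S. c e * (\<Prod>i<Suc n. f i ^ e i))"
    unfolding Q_def mon_def by (simp add: poly_sum poly_monom mult.assoc)
  then have "poly Q (f n) = 0" using Suc.prems(5) by simp
  moreover have "coeff Q d \<in> adjoin_upto B f n" for d
    unfolding coeff_Q mon_def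
    using Suc.prems(4) subset_adjoin_upto[OF B] mem_adjoin_upto[OF B] subring_adjoin_upto[OF B]
    by (intro subring_sum subring_mult subring_prod subring_power) auto
  ultimately have "Q = 0"
    using Suc.prems(1) by (auto simp: alg_indep_Suc intro: transcendental_overD)
  then have slice: "(\<Sum>e'\<in>{e'\<in>S. e' n = e n}. c e' * (\<Prod>i<n. f i ^ e' i)) = 0"
    using coeff_Q[of "e n"] unfolding mon_def by simp
  have "e' = e''" if "e' \<in> S" "e'' \<in> S" "e' n = e'' n" "\<forall>i<n. e' i = e'' i" for e' e''
    using Suc.prems(3) that by (simp add: less_Suc_eq)
  moreover have "alg_indep B n f" using Suc.prems(1) by (rule alg_indep_le) simp
  ultimately show ?case
    using Suc.prems Suc.IH[of "{e'\<in>S. e' n = e n}" e] slice by auto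
qed

lemma alg_indep_imp_not_alg_dependent:
  assumes "is_subring k" "alg_indep k n f"
  shows "\<not> alg_dependent k n f"
proof
  assume "alg_dependent k n f"
  then obtain S c where S: "finite S" "\<forall>e\<in>S. \<forall>i\<ge>n. e i = 0" "\<forall>e\<in>S. c e \<in> k"
    "\<exists>e\<in>S. c e \<noteq> 0" "(\<Sum>e\<in>S. c e * (\<Prod>i<n. f i ^ e i)) = 0"
    unfolding alg_dependent_def by blast
  have inj: "e = e'" if "e \<in> S" "e' \<in> S" "\<forall>i<n. e i = e' i" for e e'
  proof
    fix i show "e i = e' i"
    proof (cases "i < n")
      case False
      then show ?thesis using S(2)[rule_format, OF that(1)] S(2)[rule_format, OF that(2)] by simp
    qed (use that in auto)
  qed
  have "c e = 0" if "e \<in> S" for e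
    using alg_indep_monomials[OF assms S(1) inj, of c e] S(3,5) that by blast
  with S(4) show False by blast
qed

section \<open>Steinitz exchange\<close>

definition span1 :: "'a::comm_ring_1 set \<Rightarrow> nat \<Rightarrow> (nat \<Rightarrow> 'a) \<Rightarrow> 'a set" where
  "span1 k N h = {a + (\<Sum>i<N. b i * h i) | a b. a \<in> k \<and> (\<forall>i<N. b i \<in> k)}"

lemma span1I: "a \<in> k \<Longrightarrow> (\<And>i. i < N \<Longrightarrow> b i \<in> k) \<Longrightarrow> a + (\<Sum>i<N. b i * h i) \<in> span1 k N h"
  unfolding span1_def by blast

lemma span1E:
  assumes "y \<in> span1 k N h"
  obtains a b where "y = a + (\<Sum>i<N. b i * h i)" "a \<in> k" "\<forall>i<N. b i \<in> k"
  using assms unfolding span1_def by blast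

context
  fixes k :: "'a::comm_ring_1 set"
  assumes k: "is_subring k"
begin

lemma span1_base: "a \<in> k \<Longrightarrow> a \<in> span1 k N h"
  using span1I[of a k N "\<lambda>_. 0" h] by (simp add: subring_0[OF k])

lemma span1_gen:
  assumes "i < N"
  shows "h i \<in> span1 k N h"
proof -
  have "(\<Sum>j<N. (if j = i then 1 else 0) * h j) = (\<Sum>j<N. if j = i then h j else 0)"
    by (rule sum.cong) auto
  also have "\<dots> = h i" using assms by simp
  finally have "(\<Sum>j<N. (if j = i then 1 else 0) * h j) = h i" .
  moreover have "0 + (\<Sum>j<N. (if j = i then 1 else 0) * h j) \<in> span1 k N h"
    by (intro span1I) (auto simp: subring_0[OF k] subring_1[OF k])
  ultimately show ?thesis by simp
qed

lemma span1_add: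
  assumes "y \<in> span1 k N h" "z \<in> span1 k N h"
  shows "y + z \<in> span1 k N h"
proof -
  obtain a b where y: "y = a + (\<Sum>i<N. b i * h i)" "a \<in> k" "\<forall>i<N. b i \<in> k"
    using assms(1) by (rule span1E)
  obtain a' b' where z: "z = a' + (\<Sum>i<N. b' i * h i)" "a' \<in> k" "\<forall>i<N. b' i \<in> k"
    using assms(2) by (rule span1E)
  have "(a + a') + (\<Sum>i<N. (b i + b' i) * h i) \<in> span1 k N h"
    using y z by (intro span1I subring_add[OF k]) auto
  then show ?thesis unfolding y z by (simp add: sum.distrib algebra_simps)
qed

lemma span1_mult:
  assumes "c \<in> k" "y \<in> span1 k N h"
  shows "c * y \<in> span1 k N h"
proof -
  obtain a b where y: "y = a + (\<Sum>i<N. b i * h i)" "a \<in> k" "\<forall>i<N. b i \<in> k"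
    using assms(2) by (rule span1E)
  have "c * a + (\<Sum>i<N. (c * b i) * h i) \<in> span1 k N h"
    using assms(1) y by (intro span1I subring_mult[OF k]) auto
  then show ?thesis unfolding y by (simp add: sum_distrib_left algebra_simps)
qed

lemma span1_diff: "y \<in> span1 k N h \<Longrightarrow> z \<in> span1 k N h \<Longrightarrow> y - z \<in> span1 k N h"
  using span1_add span1_mult[of "- 1" z] subring_uminus[OF k subring_1[OF k]] by fastforce

lemma span1_sum:
  "(\<And>j. j \<in> A \<Longrightarrow> c j \<in> k) \<Longrightarrow> (\<And>j. j \<in> A \<Longrightarrow> y j \<in> span1 k N h)
    \<Longrightarrow> (\<Sum>j\<in>A. c j * y j) \<in> span1 k N h"
  by (induction A rule: infinite_finite_induct)
    (auto intro: span1_add span1_mult span1_base subring_0[OF k])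

lemma span1_subset:
  assumes "\<And>i. i < N \<Longrightarrow> h i \<in> span1 k N' h'"
  shows "span1 k N h \<subseteq> span1 k N' h'"
proof
  fix y assume "y \<in> span1 k N h"
  then obtain a b where y: "y = a + (\<Sum>i<N. b i * h i)" "a \<in> k" "\<forall>i<N. b i \<in> k"
    by (rule span1E)
  show "y \<in> span1 k N' h'"
    unfolding y(1) using assms y(2,3) by (intro span1_add[OF span1_base span1_sum]) auto
qed

end

lemma bij_rotate_index: "m < N \<Longrightarrow> bij_betw (rotate_index m N) {..<N} {..<N}"
  by (rule bij_betw_byWitness[where f' = "\<lambda>i. if i < m then i else if i = m then N - 1 else i - 1"])
    (auto simp: rotate_index_def)

lemma rotate_index_last: "m < N \<Longrightarrow> rotate_index m N (N - 1) = m"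
  by (simp add: rotate_index_def)

lemma rotate_index_above: "m \<le> p \<Longrightarrow> p < N - 1 \<Longrightarrow> rotate_index m N p = Suc p"
  by (simp add: rotate_index_def)

lemma span1_rotate:
  assumes "is_subring k" "m < N"
  shows "span1 k N (h \<circ> rotate_index m N) = span1 k N h"
proof
  show "span1 k N (h \<circ> rotate_index m N) \<subseteq> span1 k N h"
    using bij_betw_apply[OF bij_rotate_index[OF assms(2)]]
    by (intro span1_subset[OF assms(1)]) (auto intro: span1_gen[OF assms(1), of _ N h])
  have "h i \<in> span1 k N (h \<circ> rotate_index m N)" if "i < N" for i
  proof -
    have "i \<in> rotate_index m N ` {..<N}"
      using bij_betw_imp_surj_on[OF bij_rotate_index[OF assms(2)]] \<open>i < N\<close> by simp
    then obtain p where "p < N" "i = rotate_index m N p" by auto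
    then show ?thesis using span1_gen[OF assms(1), of p N "h \<circ> rotate_index m N"] by simp
  qed
  then show "span1 k N h \<subseteq> span1 k N (h \<circ> rotate_index m N)"
    by (rule span1_subset[OF assms(1)])
qed

lemma alg_indep_replace_last:
  fixes k :: "'a::idom set"
  assumes k: "is_subring k" and G: "alg_indep k (Suc L) G"
    and "b \<in> k" "b \<noteq> 0" "r \<in> adjoin_upto k G L"
  shows "alg_indep k (Suc L) (G(L := b * G L + r))"
proof -
  have below: "adjoin_upto k (G(L := y)) L = adjoin_upto k G L" for y
    by (rule adjoin_upto_cong) simp
  have "transcendental_over (adjoin_upto k G L) (b * G L + r)"
    using G assms(3-5) subset_adjoin_upto[OF k]
    by (intro transcendental_over_affine subring_adjoin_upto k) (auto simp: alg_indep_Suc)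
  moreover have "alg_indep k L (G(L := b * G L + r))"
    using G by (auto simp: alg_indep_Suc elim!: alg_indep_cong)
  ultimately show ?thesis by (simp add: alg_indep_Suc below)
qed

lemma span1_replace_last:
  assumes k: "is_subfield k" and "b \<in> k" "b \<noteq> 0" "r \<in> span1 k L G"
  shows "span1 k (Suc L) G \<subseteq> span1 k (Suc L) (G(L := b * G L + r))" (is "_ \<subseteq> ?S")
proof -
  have k': "is_subring k" using k by (rule subfield_imp_subring)
  have below: "G i \<in> ?S" if "i < L" for i
    using span1_gen[OF k', of i "Suc L" "G(L := b * G L + r)"] that by simp
  have "r \<in> ?S" using assms(4) below by (auto intro: span1_subset[OF k', THEN subsetD])
  moreover have "b * G L + r \<in> ?S" using span1_gen[OF k', of L "Suc L" "G(L := b * G L + r)"] by simp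
  ultimately have "inverse b * ((b * G L + r) - r) \<in> ?S"
    using k \<open>b \<in> k\<close> unfolding is_subfield_def by (intro span1_mult[OF k'] span1_diff[OF k']) auto
  then have "G L \<in> ?S" using \<open>b \<noteq> 0\<close> by (simp add: mult.assoc[symmetric])
  with below show ?thesis by (intro span1_subset[OF k']) (auto simp: less_Suc_eq)
qed

lemma exchange_coefficient:
  fixes j n d :: nat
  assumes k: "is_subring k" and "j < n"
    and indep: "\<And>u. \<forall>i<n. u i \<in> k \<Longrightarrow> (\<Sum>i<n. u i * f i) \<in> k \<Longrightarrow> \<forall>i<n. u i = 0"
    and fj: "f j = a + (\<Sum>i<d + j. \<beta> i * G i)" "a \<in> k" "\<forall>i<d + j. \<beta> i \<in> k"
    and G: "\<forall>i<j. G (d + i) = f i"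
  shows "\<exists>m<d. \<beta> m \<noteq> 0"
proof (rule ccontr)
  assume "\<not> (\<exists>m<d. \<beta> m \<noteq> 0)"
  then have "(\<Sum>i<d + j'. \<beta> i * G i) = (\<Sum>i<j'. \<beta> (d + i) * G (d + i))" for j'
    by (induction j') auto
  then have sum_f: "(\<Sum>i<d + j. \<beta> i * G i) = (\<Sum>i<j. \<beta> (d + i) * f i)"
    using G by simp
  define u where "u i = (if i < j then \<beta> (d + i) else if i = j then - 1 else 0)" for i
  have "(\<Sum>i<j. u i * f i) = (\<Sum>i<j. \<beta> (d + i) * f i)"
    by (rule sum.cong) (auto simp: u_def)
  then have "(\<Sum>i<Suc j. u i * f i) = - a"
    using fj(1) sum_f by (simp add: u_def)
  moreover have "(\<Sum>i<n. u i * f i) = (\<Sum>i<Suc j. u i * f i)"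
    by (rule sum.mono_neutral_right) (use \<open>j < n\<close> in \<open>auto simp: u_def\<close>)
  ultimately have "(\<Sum>i<n. u i * f i) \<in> k" using fj(2) subring_uminus[OF k] by simp
  moreover have "\<forall>i<n. u i \<in> k"
    using fj(3) by (auto simp: u_def subring_0[OF k] subring_uminus[OF k subring_1[OF k]])
  ultimately have "u j = 0" using indep \<open>j < n\<close> by blast
  then show False by (simp add: u_def)
qed

lemma rotate_to_last:
  assumes k: "is_subring k" and "m < Suc L" "a \<in> k" "\<forall>i<Suc L. \<beta> i \<in> k"
  obtains r where "a + (\<Sum>i<Suc L. \<beta> i * G i) = \<beta> m * (G \<circ> rotate_index m (Suc L)) L + r"
    "r \<in> adjoin_upto k (G \<circ> rotate_index m (Suc L)) L" "r \<in> span1 k L (G \<circ> rotate_index m (Suc L))"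
proof -
  define \<rho> where "\<rho> = rotate_index m (Suc L)"
  have \<rho>_bij: "bij_betw \<rho> {..<Suc L} {..<Suc L}" unfolding \<rho>_def by (rule bij_rotate_index) fact
  have \<beta>\<rho>: "\<beta> (\<rho> p) \<in> k" if "p < L" for p
    using assms(4) bij_betw_apply[OF \<rho>_bij] that by auto
  define r where "r = a + (\<Sum>p<L. \<beta> (\<rho> p) * (G \<circ> \<rho>) p)"
  have "(\<Sum>i<Suc L. \<beta> i * G i) = (\<Sum>p<Suc L. \<beta> (\<rho> p) * G (\<rho> p))"
    by (rule sum.reindex_bij_betw[OF \<rho>_bij, symmetric])
  then have "a + (\<Sum>i<Suc L. \<beta> i * G i) = \<beta> m * (G \<circ> \<rho>) L + r"
    using rotate_index_last[OF assms(2)] unfolding r_def \<rho>_def by simp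
  moreover have "r \<in> adjoin_upto k (G \<circ> \<rho>) L"
    unfolding r_def using assms(3) \<beta>\<rho> subset_adjoin_upto[OF k] mem_adjoin_upto[OF k, of _ L "G \<circ> \<rho>"]
    by (intro subring_add subring_sum subring_mult subring_adjoin_upto[OF k]) auto
  moreover have "r \<in> span1 k L (G \<circ> \<rho>)"
    unfolding r_def using assms(3) \<beta>\<rho> by (intro span1_add span1_base span1_sum span1_gen k) auto
  ultimately show ?thesis unfolding \<rho>_def by (rule that)
qed

text \<open>One step of the Steinitz exchange: the family \<open>G\<close> ends with \<open>f 0, \<dots>, f (j - 1)\<close>; a
  generator \<open>G m\<close> with \<open>m < d\<close> occurring in \<open>f j\<close> is rotated to the end and replaced by \<open>f j\<close>.\<close>
lemma exchange_step:
  fixes k :: "'a::field set"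
  assumes k: "is_subfield k" and "j < n"
    and indep: "\<And>u. \<forall>i<n. u i \<in> k \<Longrightarrow> (\<Sum>i<n. u i * f i) \<in> k \<Longrightarrow> \<forall>i<n. u i = 0"
    and G: "alg_indep k (d + j) G" "\<forall>i<j. G (d + i) = f i" "\<forall>i<n. f i \<in> span1 k (d + j) G"
  shows "\<exists>d' G'. d = Suc d' \<and> alg_indep k (d + j) G' \<and> (\<forall>i<Suc j. G' (d' + i) = f i)
    \<and> (\<forall>i<n. f i \<in> span1 k (d + j) G')"
proof -
  have k': "is_subring k" using k by (rule subfield_imp_subring)
  have "f j \<in> span1 k (d + j) G" using G(3) \<open>j < n\<close> by blast
  then obtain a \<beta> where fj: "f j = a + (\<Sum>i<d + j. \<beta> i * G i)" "a \<in> k" "\<forall>i<d + j. \<beta> i \<in> k"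
    by (rule span1E)
  obtain m where m: "m < d" "\<beta> m \<noteq> 0"
    using exchange_coefficient[OF k' \<open>j < n\<close> indep fj G(2)] by blast
  then obtain d' where d': "d = Suc d'" "m \<le> d'" by (metis less_Suc_eq_le lessE)
  define L where "L = d' + j"
  have N: "d + j = Suc L" "m < Suc L" using d' unfolding L_def by auto
  define G' where "G' = G \<circ> rotate_index m (Suc L)"
  obtain r where fj': "f j = \<beta> m * G' L + r" and r: "r \<in> adjoin_upto k G' L" "r \<in> span1 k L G'"
    using rotate_to_last[OF k' N(2) fj(2), of \<beta> G] fj(1,3) unfolding N(1) G'_def by auto
  have "alg_indep k (Suc L) (G'(L := f j))"
    unfolding fj' using alg_indep_rotate[OF k'] G(1) N fj(3) m r(1)
    by (intro alg_indep_replace_last k') (auto simp: G'_def)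
  moreover have "span1 k (Suc L) G' \<subseteq> span1 k (Suc L) (G'(L := f j))"
    unfolding fj' using m fj(3) N(1) r(2) by (intro span1_replace_last k) auto
  moreover have "span1 k (Suc L) G' = span1 k (Suc L) G"
    unfolding G'_def by (rule span1_rotate[OF k' N(2)])
  moreover have "(G'(L := f j)) (d' + i) = f i" if "i < Suc j" for i
  proof (cases "i = j")
    case False
    then have "rotate_index m (Suc L) (d' + i) = d + i"
      using that d' unfolding L_def by (subst rotate_index_above) auto
    then show ?thesis using G(2) False that unfolding G'_def L_def by auto
  qed (simp add: L_def)
  ultimately show ?thesis
    using G(3) d'(1) N(1) by (intro exI[of _ d'] exI[of _ "G'(L := f j)"]) auto
qed

lemma alg_indep_of_span1:
  fixes k :: "'a::field set"
  assumes k: "is_subfield k" and h: "alg_indep k N h" and f: "\<forall>i<n. f i \<in> span1 k N h"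
    and indep: "\<And>u. \<forall>i<n. u i \<in> k \<Longrightarrow> (\<Sum>i<n. u i * f i) \<in> k \<Longrightarrow> \<forall>i<n. u i = 0"
  shows "alg_indep k n f"
proof -
  have "\<exists>d G. d + j = N \<and> alg_indep k N G \<and> (\<forall>i<j. G (d + i) = f i) \<and> (\<forall>i<n. f i \<in> span1 k N G)"
    if "j \<le> n" for j
    using that
  proof (induction j)
    case 0
    show ?case using h f by auto
  next
    case (Suc j)
    then obtain d G where G: "d + j = N" "alg_indep k N G" "\<forall>i<j. G (d + i) = f i"
      "\<forall>i<n. f i \<in> span1 k N G" by auto
    have "j < n" using Suc.prems by simp
    then obtain d' G' where "d = Suc d'" "alg_indep k N G'" "\<forall>i<Suc j. G' (d' + i) = f i"
      "\<forall>i<n. f i \<in> span1 k N G'"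
      using exchange_step[OF k _ indep G(2-4)[folded G(1)]] G(1) by blast
    with G(1) show ?case by (intro exI[of _ d'] exI[of _ G']) auto
  qed
  then obtain d G where "d + n = N" "alg_indep k N G" "\<forall>i<n. G (d + i) = f i" by blast
  then show ?thesis
    using alg_indep_drop[OF subfield_imp_subring[OF k], of d n G] by (auto elim!: alg_indep_cong)
qed

section \<open>Derivations\<close>

lemma poly_degree_le_1:
  fixes Q :: "'a::comm_semiring_1 poly"
  assumes "degree Q \<le> 1"
  shows "poly Q x = coeff Q 0 + coeff Q 1 * x"
proof -
  have "poly Q x = (\<Sum>i\<le>1. coeff Q i * x ^ i)"
    unfolding poly_altdef using assms
    by (intro sum.mono_neutral_left) (auto simp: coeff_eq_0)
  then show ?thesis by simp
qed

locale diff_field =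
  fixes D :: "'a::field \<Rightarrow> 'a"
  assumes derivation: "derivation D"
begin

lemma D_add: "D (a + b) = D a + D b" and D_mult: "D (a * b) = D a * b + a * D b"
  using derivation unfolding derivation_def by blast+

lemma D_0 [simp]: "D 0 = 0"
  using D_add[of 0 0] by (metis add.right_neutral add_left_cancel)

lemma D_1 [simp]: "D 1 = 0"
  using D_mult[of 1 1] by (metis add.right_neutral add_left_cancel mult_1_left mult_1_right)

lemma D_uminus: "D (- a) = - D a"
  using D_add[of a "- a"] by (simp add: eq_neg_iff_add_eq_0 add.commute)

lemma D_diff: "D (a - b) = D a - D b"
  using D_add[of a "- b"] by (simp add: D_uminus)

lemma D_sum: "D (sum f A) = (\<Sum>x\<in>A. D (f x))"
  by (induction A rule: infinite_finite_induct) (auto simp: D_add)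

lemma D_of_nat [simp]: "D (of_nat n) = 0"
  by (induction n) (auto simp: D_add)

lemma D_power_Suc: "D (a ^ Suc n) = of_nat (Suc n) * a ^ n * D a"
  by (induction n) (auto simp: D_mult algebra_simps)

lemma D_inverse_const: "D c = 0 \<Longrightarrow> D (inverse c) = 0"
  using D_mult[of c "inverse c"] by (cases "c = 0") auto

end

definition deriv_poly :: "('a::idom \<Rightarrow> 'a) \<Rightarrow> 'a \<Rightarrow> 'a poly \<Rightarrow> 'a poly" where
  "deriv_poly D a Q = map_poly D Q + smult (D a) (pderiv Q)"

context diff_field
begin

lemma poly_deriv_poly: "poly (deriv_poly D a Q) a = D (poly Q a)"
proof (induction Q)
  case (pCons c Q)
  then show ?case
    by (simp add: deriv_poly_def map_poly_pCons pderiv_pCons D_add D_mult algebra_simps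
        flip: pCons.IH)
qed (simp add: deriv_poly_def)

lemma coeff_deriv_poly:
  "coeff (deriv_poly D a Q) n = D (coeff Q n) + D a * (of_nat (Suc n) * coeff Q (Suc n))"
  by (simp add: deriv_poly_def coeff_map_poly coeff_pderiv)

lemma coeff_deriv_poly_ge_degree: "degree Q \<le> n \<Longrightarrow> coeff (deriv_poly D a Q) n = D (coeff Q n)"
  by (simp add: coeff_deriv_poly coeff_eq_0)

lemma deriv_poly_coeff_closed:
  assumes R: "is_subring R" "\<And>b. b \<in> R \<Longrightarrow> D b \<in> R" and "D a \<in> R" "\<And>i. coeff Q i \<in> R"
  shows "coeff (deriv_poly D a Q) n \<in> R"
  unfolding coeff_deriv_poly using assms
  by (intro subring_add subring_mult subring_of_nat) auto

lemma adjoin_D_closed: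
  assumes R: "is_subring R" "\<And>b. b \<in> R \<Longrightarrow> D b \<in> R" and "D a \<in> R" and "y \<in> adjoin R a"
  shows "D y \<in> adjoin R a"
proof -
  obtain Q where Q: "y = poly Q a" "\<And>i. coeff Q i \<in> R"
    using \<open>y \<in> adjoin R a\<close> by (blast elim: mem_adjoinE)
  have "poly (deriv_poly D a Q) a \<in> adjoin R a"
    using assms(1-3) Q(2) by (intro mem_adjoinI deriv_poly_coeff_closed)
  then show ?thesis using Q(1) by (simp add: poly_deriv_poly)
qed

end

definition diff_simple :: "('a::comm_ring_1 \<Rightarrow> 'a) \<Rightarrow> 'a set \<Rightarrow> bool" where
  "diff_simple D R \<longleftrightarrow> (\<forall>J\<subseteq>R. (\<forall>y\<in>J. \<forall>z\<in>J. y + z \<in> J) \<and> (\<forall>r\<in>R. \<forall>y\<in>J. r * y \<in> J)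
      \<and> (\<forall>y\<in>J. D y \<in> J) \<and> (\<exists>y\<in>J. y \<noteq> 0) \<longrightarrow> 1 \<in> J)"

lemma diff_simpleD:
  assumes "diff_simple D R" "J \<subseteq> R" "\<forall>y\<in>J. \<forall>z\<in>J. y + z \<in> J" "\<forall>r\<in>R. \<forall>y\<in>J. r * y \<in> J"
    "\<forall>y\<in>J. D y \<in> J" "y \<in> J" "y \<noteq> 0"
  shows "1 \<in> J"
  using assms unfolding diff_simple_def by blast

lemma subfield_diff_simple:
  assumes "is_subfield K"
  shows "diff_simple D K"
  unfolding diff_simple_def
proof (intro allI impI)
  fix J assume "J \<subseteq> K" and "(\<forall>y\<in>J. \<forall>z\<in>J. y + z \<in> J) \<and> (\<forall>r\<in>K. \<forall>y\<in>J. r * y \<in> J)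
      \<and> (\<forall>y\<in>J. D y \<in> J) \<and> (\<exists>y\<in>J. y \<noteq> 0)"
  then obtain y where "y \<in> J" "y \<noteq> 0" "inverse y * y \<in> J"
    using assms unfolding is_subfield_def by blast
  then show "1 \<in> J" by simp
qed

lemma (in diff_field) diff_simple_coeffs_contain_1:
  fixes e :: nat
  assumes R: "diff_simple D R"
    and I: "\<And>Q i. Q \<in> I \<Longrightarrow> coeff Q i \<in> R" "\<And>P Q. P \<in> I \<Longrightarrow> Q \<in> I \<Longrightarrow> P + Q \<in> I"
      "\<And>r Q. r \<in> R \<Longrightarrow> Q \<in> I \<Longrightarrow> smult r Q \<in> I" "\<And>Q. Q \<in> I \<Longrightarrow> deriv_poly D a Q \<in> I"
    and y: "y \<in> (\<lambda>Q. coeff Q e) ` {Q \<in> I. degree Q \<le> e}" "y \<noteq> 0"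
  shows "1 \<in> (\<lambda>Q. coeff Q e) ` {Q \<in> I. degree Q \<le> e}"
proof -
  define J where "J = (\<lambda>Q. coeff Q e) ` {Q \<in> I. degree Q \<le> e}"
  have "J \<subseteq> R" unfolding J_def using I(1) by auto
  moreover have "\<forall>y\<in>J. \<forall>z\<in>J. y + z \<in> J"
  proof (intro ballI)
    fix y z assume "y \<in> J" "z \<in> J"
    then obtain P Q where "P \<in> I" "degree P \<le> e" "y = coeff P e" "Q \<in> I" "degree Q \<le> e" "z = coeff Q e"
      unfolding J_def by auto
    then show "y + z \<in> J"
      unfolding J_def using I(2) degree_add_le[of P e Q] by (intro rev_image_eqI[of "P + Q"]) auto
  qed
  moreover have "\<forall>r\<in>R. \<forall>y\<in>J. r * y \<in> J"
  proof (intro ballI)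
    fix r y assume "r \<in> R" "y \<in> J"
    then obtain Q where "Q \<in> I" "degree Q \<le> e" "y = coeff Q e" unfolding J_def by auto
    then show "r * y \<in> J"
      unfolding J_def using I(3) \<open>r \<in> R\<close> degree_smult_le[of r Q]
      by (intro rev_image_eqI[of "smult r Q"]) auto
  qed
  moreover have "\<forall>y\<in>J. D y \<in> J"
  proof
    fix y assume "y \<in> J"
    then obtain Q where Q: "Q \<in> I" "degree Q \<le> e" "y = coeff Q e" unfolding J_def by auto
    have "coeff (deriv_poly D a Q) n = 0" if "e < n" for n
      using that Q(2) by (simp add: coeff_deriv_poly_ge_degree coeff_eq_0)
    then have "degree (deriv_poly D a Q) \<le> e" by (intro degree_le) blast
    moreover have "coeff (deriv_poly D a Q) e = D y"
      using Q(2,3) by (simp add: coeff_deriv_poly_ge_degree)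
    ultimately show "D y \<in> J"
      unfolding J_def using I(4)[OF Q(1)] by (intro rev_image_eqI[of "deriv_poly D a Q"]) auto
  qed
  ultimately show ?thesis using y unfolding J_def by (rule diff_simpleD[OF R])
qed

text \<open>Let \<open>e\<close> be the least degree of a nonzero element of \<open>I\<close>. The \<open>e\<close>-th coefficients of the
  elements of \<open>I\<close> of degree at most \<open>e\<close> form a nonzero differential ideal of \<open>R\<close>, so some element
  of degree \<open>e\<close> is monic; its image under \<open>deriv_poly\<close> has smaller degree, hence vanishes.\<close>
lemma (in diff_field) diff_simple_monic_zero_deriv:
  assumes R: "diff_simple D R"
    and I: "\<And>Q i. Q \<in> I \<Longrightarrow> coeff Q i \<in> R" "\<And>P Q. P \<in> I \<Longrightarrow> Q \<in> I \<Longrightarrow> P + Q \<in> I"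
      "\<And>r Q. r \<in> R \<Longrightarrow> Q \<in> I \<Longrightarrow> smult r Q \<in> I" "\<And>Q. Q \<in> I \<Longrightarrow> deriv_poly D a Q \<in> I"
    and "Q0 \<in> I" "Q0 \<noteq> 0"
  obtains Q where "Q \<in> I" "lead_coeff Q = 1" "deriv_poly D a Q = 0"
proof -
  define e where "e = (LEAST d. \<exists>Q\<in>I. Q \<noteq> 0 \<and> degree Q = d)"
  have e_le: "e \<le> degree Q" if "Q \<in> I" "Q \<noteq> 0" for Q
    unfolding e_def using that by (auto intro: Least_le)
  obtain Q1 where Q1: "Q1 \<in> I" "Q1 \<noteq> 0" "degree Q1 = e"
    using LeastI[of "\<lambda>d. \<exists>Q\<in>I. Q \<noteq> 0 \<and> degree Q = d" "degree Q0"] assms(6,7)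
    unfolding e_def by blast
  then have Q1_lead: "lead_coeff Q1 \<in> (\<lambda>Q. coeff Q e) ` {Q \<in> I. degree Q \<le> e}" "lead_coeff Q1 \<noteq> 0"
    by (auto intro: rev_image_eqI[of Q1])
  have "1 \<in> (\<lambda>Q. coeff Q e) ` {Q \<in> I. degree Q \<le> e}"
    using diff_simple_coeffs_contain_1[OF R I Q1_lead] .
  then obtain Q where Q: "Q \<in> I" "degree Q \<le> e" "coeff Q e = 1" by auto
  then have "degree Q = e" using le_degree[of Q e] by simp
  with Q have lead: "lead_coeff Q = 1" by simp
  have "deriv_poly D a Q = 0"
  proof (rule ccontr)
    assume nz: "deriv_poly D a Q \<noteq> 0"
    have "coeff (deriv_poly D a Q) n = 0" if "e \<le> n" for n
      using that Q \<open>degree Q = e\<close>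
      by (cases "n = e") (simp_all add: coeff_deriv_poly_ge_degree coeff_eq_0)
    then have "degree (deriv_poly D a Q) < e"
      using nz leading_coeff_0_iff[of "deriv_poly D a Q"] by (meson not_le)
    with e_le[OF I(4)[OF Q(1)] nz] show False by simp
  qed
  with Q(1) lead show ?thesis by (rule that)
qed

locale diff_field_ext = diff_field D for D :: "'a::field_char_0 \<Rightarrow> 'a" +
  fixes k :: "'a set"
  assumes diff_subfield: "differential_subfield D k" and constants_subset: "constants D \<subseteq> k"
begin

lemma subfield_k: "is_subfield k"
  using diff_subfield unfolding differential_subfield_def by blast

lemma subring_k: "is_subring k"
  using subfield_k by (rule subfield_imp_subring)

lemma D_closed_k: "a \<in> k \<Longrightarrow> D a \<in> k"
  using diff_subfield unfolding differential_subfield_def by blast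

lemma inverse_closed_k: "a \<in> k \<Longrightarrow> inverse a \<in> k"
  using subfield_k unfolding is_subfield_def by blast

lemma constant_in_k: "D c = 0 \<Longrightarrow> c \<in> k"
  using constants_subset unfolding constants_def by blast

end

section \<open>The Kolchin--Ostrowski theorem\<close>

definition const_indep_mod :: "('a::field \<Rightarrow> 'a) \<Rightarrow> 'a set \<Rightarrow> nat \<Rightarrow> (nat \<Rightarrow> 'a) \<Rightarrow> bool" where
  "const_indep_mod D k N h \<longleftrightarrow> (\<forall>c. (\<forall>i<N. D (c i) = 0) \<and> (\<Sum>i<N. c i * h i) \<in> k \<longrightarrow> (\<forall>i<N. c i = 0))"

locale primitives = diff_field_ext D k for D :: "'a::field_char_0 \<Rightarrow> 'a" and k +
  fixes h :: "nat \<Rightarrow> 'a" and N :: nat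
  assumes primitive: "\<And>i. i < N \<Longrightarrow> D (h i) \<in> k" and const_indep: "const_indep_mod D k N h"
begin

abbreviation A :: "nat \<Rightarrow> 'a set" where "A m \<equiv> adjoin_upto k h m"

lemma subring_A: "is_subring (A m)"
  by (rule subring_adjoin_upto[OF subring_k])

lemma k_subset_A: "k \<subseteq> A m"
  by (rule subset_adjoin_upto[OF subring_k])

lemma A_D_closed: "m \<le> N \<Longrightarrow> y \<in> A m \<Longrightarrow> D y \<in> A m"
proof (induction m arbitrary: y)
  case (Suc m)
  then show ?case
    using adjoin_D_closed[OF subring_A, of m "h m" y] primitive[of m] k_subset_A by auto
qed (simp add: D_closed_k)

definition primitives_const_span :: "nat \<Rightarrow> bool" where
  "primitives_const_span m \<longleftrightarrow>
    (\<forall>y\<in>A m. D y \<in> k \<longrightarrow> (\<exists>c. (\<forall>i<m. D (c i) = 0) \<and> y - (\<Sum>i<m. c i * h i) \<in> k))"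

lemma h_add_not_constant:
  assumes "m < N" "primitives_const_span m" "q \<in> A m"
  shows "D (h m + q) \<noteq> 0"
proof
  assume D0: "D (h m + q) = 0"
  then have "D q = - D (h m)" by (simp add: D_add eq_neg_iff_add_eq_0 add.commute)
  then have "D q \<in> k" using primitive[OF assms(1)] subring_uminus[OF subring_k] by simp
  then obtain c where c: "\<forall>i<m. D (c i) = 0" "q - (\<Sum>i<m. c i * h i) \<in> k"
    using assms(2,3) unfolding primitives_const_span_def by blast
  define c' where "c' i = (if i < m then c i else if i = m then 1 else 0)" for i
  have "(\<Sum>i<N. c' i * h i) = (\<Sum>i<Suc m. c' i * h i)"
    by (rule sum.mono_neutral_right) (use assms(1) in \<open>auto simp: c'_def\<close>)
  also have "\<dots> = (h m + q) - (q - (\<Sum>i<m. c i * h i))"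
    by (simp add: c'_def)
  also have "\<dots> \<in> k"
    using constant_in_k[OF D0] c(2) by (rule subring_diff[OF subring_k])
  finally have "(\<Sum>i<N. c' i * h i) \<in> k" .
  moreover have "\<forall>i<N. D (c' i) = 0" using c(1) by (simp add: c'_def)
  ultimately have "c' m = 0"
    using const_indep assms(1) unfolding const_indep_mod_def by blast
  then show False by (simp add: c'_def)
qed

lemma lead_terms_not_cancel:
  assumes "m < N" "primitives_const_span m" "\<And>i. coeff Q i \<in> A m"
    and "degree Q \<noteq> 0" "D (lead_coeff Q) = 0"
  shows "coeff (deriv_poly D (h m) Q) (degree Q - 1) \<noteq> 0"
proof
  assume "coeff (deriv_poly D (h m) Q) (degree Q - 1) = 0"
  moreover define w where "w = of_nat (degree Q) * lead_coeff Q"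
  ultimately have top: "D (coeff Q (degree Q - 1)) + D (h m) * w = 0"
    using assms(4) by (simp add: coeff_deriv_poly)
  have "w \<noteq> 0" "D w = 0" using assms(4,5) unfolding w_def by (auto simp: D_mult)
  then have "inverse w \<in> k" using constant_in_k inverse_closed_k by blast
  define r where "r = coeff Q (degree Q - 1) * inverse w"
  have "r \<in> A m"
    unfolding r_def using assms(3) \<open>inverse w \<in> k\<close> k_subset_A by (blast intro: subring_mult[OF subring_A])
  have "D r = D (coeff Q (degree Q - 1)) * inverse w"
    unfolding r_def using \<open>D w = 0\<close> by (simp add: D_mult D_inverse_const)
  also have "\<dots> = - D (h m)"
    using top \<open>w \<noteq> 0\<close> by (simp add: eq_neg_iff_add_eq_0 field_simps)
  finally have "D (h m + r) = 0" by (simp add: D_add)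
  with h_add_not_constant[OF assms(1,2) \<open>r \<in> A m\<close>] show False by simp
qed

lemma one_in_diff_module:
  assumes m: "m < N" "diff_simple D (A m)" "primitives_const_span m"
    and M: "\<And>y z. y \<in> M \<Longrightarrow> z \<in> M \<Longrightarrow> y + z \<in> M" "\<And>r y. r \<in> A m \<Longrightarrow> y \<in> M \<Longrightarrow> r * y \<in> M"
      "\<And>y. y \<in> M \<Longrightarrow> D y \<in> M"
    and Q0: "Q0 \<noteq> 0" "\<And>i. coeff Q0 i \<in> A m" "poly Q0 (h m) \<in> M"
  shows "1 \<in> M"
proof -
  let ?I = "{Q. (\<forall>i. coeff Q i \<in> A m) \<and> poly Q (h m) \<in> M}"
  have Dh: "D (h m) \<in> A m" using primitive[OF m(1)] k_subset_A by blast
  obtain Q where Q: "Q \<in> ?I" "lead_coeff Q = 1" "deriv_poly D (h m) Q = 0"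
  proof (rule diff_simple_monic_zero_deriv[OF m(2), of ?I "h m" Q0])
    show "P + Q \<in> ?I" if "P \<in> ?I" "Q \<in> ?I" for P Q
      using that M(1) by (auto intro: subring_add[OF subring_A])
    show "smult r Q \<in> ?I" if "r \<in> A m" "Q \<in> ?I" for r Q
      using that M(2) by (auto intro: subring_mult[OF subring_A])
    show "deriv_poly D (h m) Q \<in> ?I" if "Q \<in> ?I" for Q
      using that M(3) A_D_closed[of m] Dh m(1)
      by (auto simp: poly_deriv_poly intro: deriv_poly_coeff_closed[OF subring_A])
  qed (use Q0 in auto)
  have "degree Q = 0"
    using lead_terms_not_cancel[OF m(1,3), of Q] Q by auto
  then have "Q = 1" using Q(2) by (auto elim: degree_eq_zeroE)
  then show ?thesis using Q(1) by simp
qed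

lemma transcendental_step:
  assumes "m < N" "diff_simple D (A m)" "primitives_const_span m"
  shows "transcendental_over (A m) (h m)"
  unfolding transcendental_over_def
proof (intro allI impI)
  fix Q assume "\<forall>i. coeff Q i \<in> A m" "poly Q (h m) = 0"
  with one_in_diff_module[OF assms, of "{0}" Q] show "Q = 0" by auto
qed

lemma diff_simple_step:
  assumes "m < N" "diff_simple D (A m)" "primitives_const_span m"
  shows "diff_simple D (A (Suc m))"
  unfolding diff_simple_def
proof (intro allI impI)
  fix J assume "J \<subseteq> A (Suc m)" and "(\<forall>y\<in>J. \<forall>z\<in>J. y + z \<in> J)
      \<and> (\<forall>r\<in>A (Suc m). \<forall>y\<in>J. r * y \<in> J) \<and> (\<forall>y\<in>J. D y \<in> J) \<and> (\<exists>y\<in>J. y \<noteq> 0)"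
  note J = this
  then obtain y where "y \<in> J" "y \<noteq> 0" by blast
  moreover obtain Q where Q: "y = poly Q (h m)" "\<And>i. coeff Q i \<in> A m"
    using J \<open>y \<in> J\<close> by (auto elim: mem_adjoinE)
  moreover have "A m \<subseteq> A (Suc m)" using subset_adjoin[OF subring_A] by simp
  ultimately show "1 \<in> J"
    using J by (intro one_in_diff_module[OF assms, of J Q]) auto
qed

lemma primitive_poly_linear:
  assumes m: "m < N" "diff_simple D (A m)" "primitives_const_span m"
    and Q: "\<And>i. coeff Q i \<in> A m" "D (poly Q (h m)) \<in> k"
  shows "degree Q \<le> 1" "D (coeff Q 1) = 0"
proof -
  have "coeff (deriv_poly D (h m) Q) i \<in> A m" for i
    using primitive[OF m(1)] k_subset_A A_D_closed m(1) Q(1)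
    by (intro deriv_poly_coeff_closed[OF subring_A]) auto
  then have "coeff (deriv_poly D (h m) Q - [:D (poly Q (h m)):]) i \<in> A m" for i
    using Q(2) k_subset_A
    by (auto simp: coeff_pCons subring_0[OF subring_A] intro!: subring_diff[OF subring_A] split: nat.split)
  moreover have "poly (deriv_poly D (h m) Q - [:D (poly Q (h m)):]) (h m) = 0"
    by (simp add: poly_deriv_poly)
  ultimately have dQ: "deriv_poly D (h m) Q = [:D (poly Q (h m)):]"
    using transcendental_overD[OF transcendental_step[OF m]] by fastforce
  show "degree Q \<le> 1"
  proof (rule ccontr)
    assume deg: "\<not> degree Q \<le> 1"
    then have "D (lead_coeff Q) = 0"
      using coeff_deriv_poly_ge_degree[of Q "degree Q" "h m"] dQ
      by (simp add: coeff_pCons split: nat.split_asm)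
    moreover have "coeff (deriv_poly D (h m) Q) (degree Q - 1) = 0"
      using dQ deg by (simp add: coeff_pCons split: nat.split)
    ultimately show False using lead_terms_not_cancel[OF m(1,3) Q(1)] deg by simp
  qed
  then show "D (coeff Q 1) = 0"
    using coeff_deriv_poly_ge_degree[of Q 1 "h m"] dQ by simp
qed

lemma primitives_step:
  assumes m: "m < N" "diff_simple D (A m)" "primitives_const_span m"
  shows "primitives_const_span (Suc m)"
  unfolding primitives_const_span_def
proof (intro ballI impI)
  fix y assume "y \<in> A (Suc m)" "D y \<in> k"
  then obtain Q where Q: "y = poly Q (h m)" "\<And>i. coeff Q i \<in> A m" by (auto elim: mem_adjoinE)
  have "degree Q \<le> 1" and D1: "D (coeff Q 1) = 0"
    using primitive_poly_linear[OF m Q(2)] Q(1) \<open>D y \<in> k\<close> by auto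
  then have y: "y = coeff Q 0 + coeff Q 1 * h m" using Q(1) poly_degree_le_1 by simp
  then have "D (coeff Q 0) = D y - coeff Q 1 * D (h m)" using D1 by (simp add: D_add D_mult)
  also have "\<dots> \<in> k"
    using \<open>D y \<in> k\<close> primitive[OF m(1)] constant_in_k[OF D1]
    by (intro subring_diff[OF subring_k] subring_mult[OF subring_k])
  finally obtain c where c: "\<forall>i<m. D (c i) = 0" "coeff Q 0 - (\<Sum>i<m. c i * h i) \<in> k"
    using m(3) Q(2) unfolding primitives_const_span_def by blast
  have "(\<Sum>i<m. (c(m := coeff Q 1)) i * h i) = (\<Sum>i<m. c i * h i)" by (rule sum.cong) auto
  then have eq: "y - (\<Sum>i<Suc m. (c(m := coeff Q 1)) i * h i) = coeff Q 0 - (\<Sum>i<m. c i * h i)"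
    using y by simp
  have "y - (\<Sum>i<Suc m. (c(m := coeff Q 1)) i * h i) \<in> k" unfolding eq by (rule c(2))
  moreover have "\<forall>i<Suc m. D ((c(m := coeff Q 1)) i) = 0" using c(1) D1 by (simp add: less_Suc_eq)
  ultimately show "\<exists>c. (\<forall>i<Suc m. D (c i) = 0) \<and> y - (\<Sum>i<Suc m. c i * h i) \<in> k"
    by blast
qed

theorem kolchin_ostrowski: "alg_indep k N h"
proof -
  have "diff_simple D (A m) \<and> primitives_const_span m \<and> alg_indep k m h" if "m \<le> N" for m
    using that
  proof (induction m)
    case 0
    show ?case
      using subfield_diff_simple[OF subfield_k]
      by (simp add: primitives_const_span_def alg_indep_def)
  next
    case (Suc m)
    then show ?case
      using diff_simple_step primitives_step transcendental_step by (simp add: alg_indep_Suc)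
  qed
  then show ?thesis by blast
qed

end

section \<open>Iterated integrals\<close>

context diff_field_ext
begin

lemma extend_basis:
  assumes h: "const_indep_mod D k N h" "\<forall>i<N. D (h i) \<in> k" and "D y \<in> k"
  shows "\<exists>N' h'. const_indep_mod D k N' h' \<and> (\<forall>i<N'. D (h' i) \<in> k)
    \<and> span1 k N h \<subseteq> span1 k N' h' \<and> y \<in> span1 k N' h'"
proof (cases "const_indep_mod D k (Suc N) (h(N := y))")
  case True
  have "h i \<in> span1 k (Suc N) (h(N := y))" if "i < N" for i
    using span1_gen[OF subring_k, of i "Suc N" "h(N := y)"] that by simp
  then have "span1 k N h \<subseteq> span1 k (Suc N) (h(N := y))" by (rule span1_subset[OF subring_k])
  moreover have "y \<in> span1 k (Suc N) (h(N := y))"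
    using span1_gen[OF subring_k, of N "Suc N" "h(N := y)"] by simp
  moreover have "\<forall>i<Suc N. D ((h(N := y)) i) \<in> k" using h(2) \<open>D y \<in> k\<close> by (simp add: less_Suc_eq)
  ultimately show ?thesis using True by blast
next
  case False
  have "(\<Sum>i<N. c i * (h(N := y)) i) = (\<Sum>i<N. c i * h i)" for c by (rule sum.cong) auto
  with False obtain c where c: "\<forall>i<Suc N. D (c i) = 0" "(\<Sum>i<N. c i * h i) + c N * y \<in> k"
    "\<exists>i<Suc N. c i \<noteq> 0"
    unfolding const_indep_mod_def by auto
  have "c N \<noteq> 0"
  proof
    assume "c N = 0"
    with c h(1) have "\<forall>i<N. c i = 0" unfolding const_indep_mod_def by auto
    with c(3) \<open>c N = 0\<close> show False by (auto simp: less_Suc_eq)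
  qed
  have "y = inverse (c N) * (((\<Sum>i<N. c i * h i) + c N * y) - (\<Sum>i<N. c i * h i))"
    using \<open>c N \<noteq> 0\<close> by simp
  also have "\<dots> \<in> span1 k N h"
    using c(1,2) constant_in_k inverse_closed_k
    by (intro span1_mult[OF subring_k] span1_diff[OF subring_k] span1_base[OF subring_k]
        span1_sum[OF subring_k] span1_gen[OF subring_k]) auto
  finally show ?thesis using h by blast
qed

lemma extend_basis_list:
  fixes r :: nat
  assumes h: "const_indep_mod D k N h" "\<forall>i<N. D (h i) \<in> k" and H: "\<forall>j<r. D (H j) \<in> k"
  shows "\<exists>N' h'. const_indep_mod D k N' h' \<and> (\<forall>i<N'. D (h' i) \<in> k)
    \<and> span1 k N h \<subseteq> span1 k N' h' \<and> (\<forall>j<r. H j \<in> span1 k N' h')"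
  using H
proof (induction r)
  case (Suc r)
  then obtain N1 h1 where 1: "const_indep_mod D k N1 h1" "\<forall>i<N1. D (h1 i) \<in> k"
    "span1 k N h \<subseteq> span1 k N1 h1" "\<forall>j<r. H j \<in> span1 k N1 h1" by auto
  obtain N2 h2 where 2: "const_indep_mod D k N2 h2" "\<forall>i<N2. D (h2 i) \<in> k"
    "span1 k N1 h1 \<subseteq> span1 k N2 h2" "H r \<in> span1 k N2 h2"
    using extend_basis[OF 1(1,2), of "H r"] Suc.prems by auto
  from 1 2 show ?case by (intro exI[of _ N2] exI[of _ h2]) (auto simp: less_Suc_eq)
qed (use h in auto)

text \<open>Integration by parts: \<open>\<integral> x\<^sup>e H = x\<^sup>e\<^sup>+\<^sup>1 H / (e + 1) - \<integral> x\<^sup>e\<^sup>+\<^sup>1 H' / (e + 1)\<close>,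
  and the last integrand lies in \<open>k\<close>.\<close>
lemma integrate_power_times_primitive:
  assumes x: "x \<in> k" "D x = 1" and "D H \<in> k"
  obtains H' where "D H' \<in> k" "D (x ^ Suc e * H') - x ^ e * H \<in> k"
proof
  define H' where "H' = H * inverse (of_nat (Suc e))"
  have "D H' = D H * inverse (of_nat (Suc e))"
    unfolding H'_def by (simp add: D_mult D_inverse_const del: of_nat_Suc)
  then show DH': "D H' \<in> k"
    using \<open>D H \<in> k\<close> inverse_closed_k[OF subring_of_nat[OF subring_k]]
    by (simp add: subring_mult[OF subring_k] del: of_nat_Suc)
  have "D (x ^ Suc e) = of_nat (Suc e) * x ^ e"
    using D_power_Suc[of x e] x(2) by (simp only: mult_1_right)
  then have "D (x ^ Suc e * H') = of_nat (Suc e) * x ^ e * H' + x ^ Suc e * D H'"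
    by (simp only: D_mult)
  also have "of_nat (Suc e) * x ^ e * H' = x ^ e * H"
    unfolding H'_def by (simp add: field_simps del: of_nat_Suc)
  finally show "D (x ^ Suc e * H') - x ^ e * H \<in> k"
    using x(1) DH' by (simp add: subring_mult[OF subring_k] subring_power[OF subring_k])
qed

lemma iterated_integral_decomp:
  assumes x: "x \<in> k" "D x = 1"
  shows "(D ^^ m) g \<in> k \<Longrightarrow> \<exists>(r::nat) (e::nat \<Rightarrow> nat) H. (\<forall>j<r. D (H j) \<in> k) \<and> g = (\<Sum>j<r. x ^ e j * H j)"
proof (induction m arbitrary: g)
  case 0
  then show ?case
    by (intro exI[of _ 1] exI[of _ "\<lambda>_. 0"] exI[of _ "\<lambda>_. g"]) (simp add: D_closed_k)
next
  case (Suc m)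
  then have "(D ^^ m) (D g) \<in> k" by (simp add: funpow_Suc_right del: funpow.simps)
  then obtain r :: nat and e H where H: "\<forall>j<r. D (H j) \<in> k" "D g = (\<Sum>j<r. x ^ e j * H j)"
    using Suc.IH by blast
  have "\<forall>j<r. \<exists>H'. D H' \<in> k \<and> D (x ^ Suc (e j) * H') - x ^ e j * H j \<in> k"
    using H(1) integrate_power_times_primitive[OF x] by metis
  then obtain H' where H': "\<And>j. j < r \<Longrightarrow> D (H' j) \<in> k"
    "\<And>j. j < r \<Longrightarrow> D (x ^ Suc (e j) * H' j) - x ^ e j * H j \<in> k"
    by metis
  define G where "G = (\<Sum>j<r. x ^ Suc (e j) * H' j)"
  have "D (g - G) = - (\<Sum>j<r. D (x ^ Suc (e j) * H' j) - x ^ e j * H j)"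
    using H(2) unfolding G_def by (simp add: D_diff D_sum sum_subtractf)
  also have "\<dots> \<in> k"
    using H'(2) by (intro subring_uminus[OF subring_k] subring_sum[OF subring_k]) auto
  finally have "D (g - G) \<in> k" .
  have "(\<Sum>j<r. x ^ ((\<lambda>j. Suc (e j))(r := 0)) j * (H'(r := g - G)) j) = G"
    unfolding G_def by (rule sum.cong) auto
  then have "g = (\<Sum>j<Suc r. x ^ ((\<lambda>j. Suc (e j))(r := 0)) j * (H'(r := g - G)) j)"
    by simp
  moreover have "\<forall>j<Suc r. D ((H'(r := g - G)) j) \<in> k"
    using \<open>D (g - G) \<in> k\<close> H'(1) by (simp add: less_Suc_eq)
  ultimately show ?case by blast
qed

lemma iterated_integrals_basis:
  fixes f :: "nat \<Rightarrow> 'a" and n :: nat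
  assumes x: "x \<in> k" "D x = 1" and f: "\<forall>i<n. iterated_integral D k (f i)"
  shows "\<exists>N h. const_indep_mod D k N h \<and> (\<forall>i<N. D (h i) \<in> k) \<and> (\<forall>i<n. f i \<in> span1 k N h)"
  using f
proof (induction n)
  case 0
  have "const_indep_mod D k 0 h" for h unfolding const_indep_mod_def by simp
  then show ?case by blast
next
  case (Suc n)
  then obtain N h where h: "const_indep_mod D k N h" "\<forall>i<N. D (h i) \<in> k" "\<forall>i<n. f i \<in> span1 k N h"
    by auto
  obtain r :: nat and e H where H: "\<forall>j<r. D (H j) \<in> k" "f n = (\<Sum>j<r. x ^ e j * H j)"
    using Suc.prems iterated_integral_decomp[OF x] unfolding iterated_integral_def by blast
  obtain N' h' where h': "const_indep_mod D k N' h'" "\<forall>i<N'. D (h' i) \<in> k"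
    "span1 k N h \<subseteq> span1 k N' h'" "\<forall>j<r. H j \<in> span1 k N' h'"
    using extend_basis_list[OF h(1,2) H(1)] by blast
  have "f n \<in> span1 k N' h'"
    unfolding H(2) using h'(4) x(1) by (intro span1_sum[OF subring_k] subring_power[OF subring_k]) auto
  with h h' show ?case by (intro exI[of _ N'] exI[of _ h']) (auto simp: less_Suc_eq)
qed

end

theorem proposition34:
  fixes D :: "'a::field_char_0 \<Rightarrow> 'a" and k :: "'a set" and f :: "nat \<Rightarrow> 'a" and n :: nat
  assumes "derivation D"
    and "differential_subfield D k"
    and "constants D \<subseteq> k"
    and "alg_closed_set (constants D)"
    and "\<exists>x\<in>k. D x = 1"
    and "\<forall>i<n. iterated_integral D k (f i)"
    and "alg_dependent k n f"
  shows "\<exists>u :: nat \<Rightarrow> 'a. (\<forall>i<n. u i \<in> k) \<and> (\<exists>i<n. u i \<noteq> 0) \<and> (\<Sum>i<n. u i * f i) \<in> k"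
proof (rule ccontr)
  assume "\<not> ?thesis"
  then have indep: "\<And>u. \<forall>i<n. u i \<in> k \<Longrightarrow> (\<Sum>i<n. u i * f i) \<in> k \<Longrightarrow> \<forall>i<n. u i = 0"
    by blast
  interpret diff_field_ext D k
    using assms(1-3) by unfold_locales
  obtain x where "x \<in> k" "D x = 1" using assms(5) by blast
  then obtain N h where h: "const_indep_mod D k N h" "\<forall>i<N. D (h i) \<in> k" "\<forall>i<n. f i \<in> span1 k N h"
    using iterated_integrals_basis assms(6) by blast
  interpret primitives D k h N
    using h(1,2) by unfold_locales auto
  have "alg_indep k n f"
    using alg_indep_of_span1[OF subfield_k kolchin_ostrowski h(3) indep] .
  with assms(7) show False using alg_indep_imp_not_alg_dependent[OF subring_k] by blast
qed

end
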